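(* Let $\mathcal A_1'=\mathrm{MSG}(\mathcal S_1)\setminus\{a_n\}$, for $s\in\mathbb N$ let $\mathrm{Ap}_1^{(s)}=\mathrm{Ap}_1\cap s\mathcal A_1'$, and let $N=\max\{s\in\mathbb N:\mathrm{Ap}_1^{(s)}\ne\emptyset\}$. Then $(\mathrm{Ap}_1,\le_1)$ is graded if and only if $\sum_{s=0}^{N}|\mathrm{Ap}_1^{(s)}|=d$.
   Context: Let $d\ge 1$ and $0<a_1<\dots<a_n=d$ integers with $\gcd(a_1,\dots,a_n)=1$. Let $\mathcal S_1\subseteq\mathbb N$ be the numerical semigroup generated by $a_1,\dots,a_n$ and $\mathrm{MSG}(\mathcal S_1)$ its minimal system of generators. Partial order: $y\le_1 z$ iff $z-y\in\mathcal S_1$. $\mathrm{Ap}_1=\{y\in\mathcal S_1:y-d\notin\mathcal S_1\}$ with induced order (it has exactly $d$ elements). For a finite set $A\subset\mathbb N$ and $s\ge1$, $sA=\{b_1+\dots+b_s: b_j\in A\}$, and $0A=\{0\}$. A finite poset is graded if there is $\rho:P\to\mathbb N$ with $\rho(z)=\rho(y)+1$ whenever $z$ covers $y$ (i.e. $y<z$ with nothing strictly between). *)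

theory Defs
  imports Main
begin

inductive_set gen_semigroup :: "nat set \<Rightarrow> nat set" for A :: "nat set" where
  zero: "0 \<in> gen_semigroup A"
| add: "x \<in> gen_semigroup A \<Longrightarrow> b \<in> A \<Longrightarrow> x + b \<in> gen_semigroup A"

definition msg :: "nat set \<Rightarrow> nat set" where
  "msg S = {x \<in> S. x \<noteq> 0 \<and>
      \<not> (\<exists>y\<in>S. \<exists>z\<in>S. y \<noteq> 0 \<and> z \<noteq> 0 \<and> x = y + z)}"

fun sumset :: "nat \<Rightarrow> nat set \<Rightarrow> nat set" where
  "sumset 0 A = {0}"
| "sumset (Suc s) A = {x + b | x b. x \<in> sumset s A \<and> b \<in> A}"

definition apery :: "nat set \<Rightarrow> nat \<Rightarrow> nat set" where
  "apery S d = {y \<in> S. \<not> (d \<le> y \<and> y - d \<in> S)}"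

definition sg_le :: "nat set \<Rightarrow> nat \<Rightarrow> nat \<Rightarrow> bool" where
  "sg_le S y z \<longleftrightarrow> y \<le> z \<and> z - y \<in> S"

definition covers_in :: "'a set \<Rightarrow> ('a \<Rightarrow> 'a \<Rightarrow> bool) \<Rightarrow> 'a \<Rightarrow> 'a \<Rightarrow> bool" where
  "covers_in P le y z \<longleftrightarrow> y \<in> P \<and> z \<in> P \<and> le y z \<and> y \<noteq> z \<and>
      \<not> (\<exists>w\<in>P. le y w \<and> le w z \<and> w \<noteq> y \<and> w \<noteq> z)"

definition graded :: "'a set \<Rightarrow> ('a \<Rightarrow> 'a \<Rightarrow> bool) \<Rightarrow> bool" where
  "graded P le \<longleftrightarrow> (\<exists>\<rho> :: 'a \<Rightarrow> nat. \<forall>y z. covers_in P le y z \<longrightarrow> \<rho> z = \<rho> y + 1)"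

end

theory Submission
  imports Defs "HOL-Computational_Algebra.Group_Closure"
begin

text \<open>
  Since \<open>gcd = 1\<close>, the Apery set \<open>Ap\<close> of \<open>d\<close> contains exactly one element of each residue
  class modulo \<open>d\<close>, so \<open>|Ap| = d\<close>. \<open>Ap\<close> is closed under taking summands inside the semigroup
  and never contains \<open>x + d\<close>, so every element of \<open>Ap\<close> is a sum of minimal generators different
  from \<open>d\<close>, and the covers in \<open>(Ap, \<le>\<^sub>S)\<close> are exactly the steps \<open>y \<prec> y + b\<close> with \<open>b\<close> a minimal
  generator. Hence \<open>Ap\<close> is graded iff every element has a unique factorisation length over
  \<open>A'\<close>. The sum \<open>\<Sum>\<^sub>s |Ap \<inter> sA'|\<close> counts every element once per length, so it equals \<open>|Ap| = d\<close>
  exactly in that case.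
\<close>

lemma le_of_Suc_less:
  fixes f :: "nat \<Rightarrow> nat"
  assumes "m \<le> n" and "\<And>i. m \<le> i \<Longrightarrow> i < n \<Longrightarrow> f i < f (Suc i)"
  shows "f m \<le> f n"
  using assms(1)
proof (induction n rule: dec_induct)
  case (step i)
  with assms(2)[of i] show ?case by simp
qed simp

lemma sum_card_inter_swap:
  assumes "finite P" "finite I"
  shows "(\<Sum>s\<in>I. card (P \<inter> B s)) = (\<Sum>w\<in>P. card {s\<in>I. w \<in> B s})"
proof -
  have "(\<Sum>s\<in>I. card (P \<inter> B s)) = (\<Sum>s\<in>I. \<Sum>w\<in>P. if w \<in> B s then 1 else 0)"
    by (simp add: Int_def sum.inter_filter[OF assms(1), symmetric])
  also have "\<dots> = (\<Sum>w\<in>P. \<Sum>s\<in>I. if w \<in> B s then 1 else 0)"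
    by (rule sum.swap)
  also have "\<dots> = (\<Sum>w\<in>P. card {s\<in>I. w \<in> B s})"
    by (simp add: sum.inter_filter[OF assms(2), symmetric])
  finally show ?thesis .
qed

lemma sum_card_inter_eq_card_iff:
  assumes "finite P" "finite I" and covered: "\<And>w. w \<in> P \<Longrightarrow> \<exists>s\<in>I. w \<in> B s"
  shows "(\<Sum>s\<in>I. card (P \<inter> B s)) = card P \<longleftrightarrow>
         (\<forall>w\<in>P. \<forall>s\<in>I. \<forall>t\<in>I. w \<in> B s \<longrightarrow> w \<in> B t \<longrightarrow> s = t)"
proof -
  let ?L = "\<lambda>w. {s\<in>I. w \<in> B s}"
  have fin: "finite (?L w)" for w
    using assms(2) by simp
  have pos: "1 \<le> card (?L w)" if "w \<in> P" for w
    using covered[OF that] fin[of w] by (auto simp: Suc_le_eq card_gt_0_iff)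
  have "(\<Sum>w\<in>P. card (?L w)) = (\<Sum>w\<in>P. 1) \<longleftrightarrow> (\<forall>w\<in>P. card (?L w) = 1)"
  proof
    assume "(\<Sum>w\<in>P. card (?L w)) = (\<Sum>w\<in>P. 1)"
    from sum_mono_inv[OF this[symmetric] pos _ assms(1)]
    show "\<forall>w\<in>P. card (?L w) = 1" by simp
  qed simp
  also have "\<dots> \<longleftrightarrow> (\<forall>w\<in>P. \<forall>s\<in>I. \<forall>t\<in>I. w \<in> B s \<longrightarrow> w \<in> B t \<longrightarrow> s = t)"
  proof -
    have "card (?L w) = 1 \<longleftrightarrow> card (?L w) \<le> Suc 0" if "w \<in> P" for w
      using pos[OF that] by linarith
    then show ?thesis
      unfolding card_le_Suc0_iff_eq[OF fin] by auto
  qed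
  finally show ?thesis
    using sum_card_inter_swap[OF assms(1,2)] by simp
qed

lemma gen_semigroup_generator: "b \<in> A \<Longrightarrow> b \<in> gen_semigroup A"
  using gen_semigroup.add[OF gen_semigroup.zero] by simp

lemma gen_semigroup_add:
  assumes "x \<in> gen_semigroup A" and "y \<in> gen_semigroup A"
  shows "x + y \<in> gen_semigroup A"
  using assms(2)
proof induction
  case (add y b)
  then show ?case using gen_semigroup.add[of "x + y" A b] by (simp add: add.assoc)
qed (simp add: assms(1))

lemma gen_semigroup_mult: "x \<in> gen_semigroup A \<Longrightarrow> k * x \<in> gen_semigroup A"
  by (induction k) (auto intro: gen_semigroup_add gen_semigroup.zero)

lemma sumset_add: "x \<in> sumset s B \<Longrightarrow> y \<in> sumset t B \<Longrightarrow> x + y \<in> sumset (s + t) B"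
proof (induction t arbitrary: y)
  case (Suc t)
  then obtain y' b where "y = y' + b" "y' \<in> sumset t B" "b \<in> B" by auto
  with Suc.IH[of y'] Suc.prems have "(x + y') + b \<in> sumset (Suc (s + t)) B" by auto
  with \<open>y = y' + b\<close> show ?case by (simp add: add.assoc)
qed simp

lemma sumset_subset_gen_semigroup:
  "B \<subseteq> gen_semigroup A \<Longrightarrow> sumset s B \<subseteq> gen_semigroup A"
  by (induction s) (auto intro: gen_semigroup.zero gen_semigroup_add)

lemma sumset_index_le: "0 \<notin> B \<Longrightarrow> x \<in> sumset s B \<Longrightarrow> s \<le> x"
proof (induction s arbitrary: x)
  case (Suc s)
  then obtain x' b where "x = x' + b" "x' \<in> sumset s B" "b \<in> B" by auto
  moreover have "b \<noteq> 0" using Suc.prems(1) \<open>b \<in> B\<close> by (cases "b = 0") simp_all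
  ultimately show ?case using Suc.IH[OF Suc.prems(1)] by fastforce
qed simp

lemma msg_subset: "msg S \<subseteq> S"
  and zero_notin_msg: "0 \<notin> msg S"
  by (auto simp: msg_def)

lemma ex_sumset_msg: "w \<in> S \<Longrightarrow> \<exists>s. w \<in> sumset s (msg (S :: nat set))"
proof (induction w rule: less_induct)
  case (less w)
  consider "w = 0" | "w \<in> msg S"
    | y z where "y \<in> S" "z \<in> S" "y \<noteq> 0" "z \<noteq> 0" "w = y + z"
    using less.prems by (auto simp: msg_def)
  then show ?case
  proof cases
    case 1
    then show ?thesis by (intro exI[of _ 0]) simp
  next
    case 2
    then show ?thesis by (intro exI[of _ 1]) auto
  next
    case 3
    then have "y < w" "z < w" by auto
    with 3 less.IH obtain s t where "y \<in> sumset s (msg S)" "z \<in> sumset t (msg S)"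
      by blast
    with \<open>w = y + z\<close> show ?thesis by (blast intro: sumset_add)
  qed
qed

lemma sumset_index_le_Max:
  assumes "finite P" "0 \<notin> B" "w \<in> P" "w \<in> sumset s B"
  shows "s \<le> Max {s. P \<inter> sumset s B \<noteq> {}}"
proof (rule Max_ge)
  have "{s. P \<inter> sumset s B \<noteq> {}} \<subseteq> {..Max P}"
  proof
    fix s assume "s \<in> {s. P \<inter> sumset s B \<noteq> {}}"
    then obtain v where "v \<in> P" "v \<in> sumset s B" by blast
    then have "s \<le> v" "v \<le> Max P"
      using sumset_index_le[OF assms(2)] Max_ge[OF assms(1)] by simp_all
    then show "s \<in> {..Max P}" by simp
  qed
  then show "finite {s. P \<inter> sumset s B \<noteq> {}}"
    by (rule finite_subset) simp
qed (use assms(3,4) in blast)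

lemma group_closure_mod_gen_semigroup:
  assumes "k \<in> group_closure (int ` A)" and "0 < d"
  shows "\<exists>x\<in>gen_semigroup A. int x mod int d = k mod int d"
  using assms(1)
proof induction
  case (base k)
  then consider "k = 0" | b where "b \<in> A" "k = int b" by blast
  then show ?case
  proof cases
    case 1
    with gen_semigroup.zero show ?thesis by force
  next
    case 2
    with gen_semigroup_generator show ?thesis by blast
  qed
next
  case (diff s t)
  then obtain x y where xy: "x \<in> gen_semigroup A" "int x mod int d = s mod int d"
    "y \<in> gen_semigroup A" "int y mod int d = t mod int d" by blast
  \<comment> \<open>modulo \<open>d\<close>, subtracting \<open>y\<close> is adding \<open>(d - 1) y\<close>\<close>
  obtain e where "d = Suc e" using assms(2) by (cases d) auto
  then have eq: "int (x + e * y) = (int x - int y) + int d * int y"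
    by (simp add: algebra_simps)
  have "int (x + e * y) mod int d = (int x - int y) mod int d"
    unfolding eq by (rule mod_mult_self2)
  also have "\<dots> = (s - t) mod int d"
    using xy(2,4) by (rule mod_diff_cong)
  finally have "int (x + e * y) mod int d = (s - t) mod int d" .
  moreover have "x + e * y \<in> gen_semigroup A"
    using xy(1,3) by (intro gen_semigroup_add gen_semigroup_mult)
  ultimately show ?case by blast
qed

lemma gen_semigroup_mod_surj:
  assumes "Gcd A = 1" and "r < d"
  shows "\<exists>x\<in>gen_semigroup A. x mod d = r"
proof -
  have "1 \<in> group_closure (int ` A)"
    using Gcd_in_group_closure[of "int ` A"] assms(1) by simp
  then obtain x where x: "x \<in> gen_semigroup A" "int x mod int d = 1 mod int d"
    using group_closure_mod_gen_semigroup[of 1 A d] assms(2) by auto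
  then have "int (x mod d) = int (1 mod d)"
    by (simp only: zmod_int of_nat_1)
  then have "(r * x) mod d = (r * 1) mod d"
    by (metis mod_mult_right_eq of_nat_eq_iff)
  then have "(r * x) mod d = r"
    using assms(2) by simp
  with x(1) show ?thesis by (blast intro: gen_semigroup_mult)
qed

lemma add_notin_apery: "x \<in> S \<Longrightarrow> x + d \<notin> apery S d"
  by (simp add: apery_def)

lemma apery_subset: "apery S d \<subseteq> S"
  by (auto simp: apery_def)

lemma apery_summand:
  assumes "x + y \<in> apery (gen_semigroup A) d" "x \<in> gen_semigroup A" "y \<in> gen_semigroup A"
  shows "x \<in> apery (gen_semigroup A) d"
proof (rule ccontr)
  assume "x \<notin> apery (gen_semigroup A) d"
  then have "d \<le> x" "x - d \<in> gen_semigroup A"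
    using assms(2) by (auto simp: apery_def)
  then have "(x - d + y) + d \<notin> apery (gen_semigroup A) d"
    using assms(3) by (intro add_notin_apery gen_semigroup_add)
  with \<open>d \<le> x\<close> assms(1) show False by simp
qed

lemma apery_mod_inj:
  assumes "d \<in> gen_semigroup A"
  shows "inj_on (\<lambda>w. w mod d) (apery (gen_semigroup A) d)"
proof -
  have "y \<notin> apery (gen_semigroup A) d"
    if x: "x \<in> gen_semigroup A" and lt: "x < y" and eq: "x mod d = y mod d" for x y
  proof -
    obtain k where "y = x + d * k"
      using lt eq by (metis le_less mod_eq_dvd_iff_nat dvdE le_add_diff_inverse)
    then obtain j where "y = (x + j * d) + d"
      using lt by (cases k) (auto simp: algebra_simps)
    moreover have "x + j * d \<in> gen_semigroup A"
      using x assms by (intro gen_semigroup_add gen_semigroup_mult)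
    ultimately show ?thesis by (simp add: add_notin_apery)
  qed
  then show ?thesis
    by (intro inj_onI) (metis apery_subset linorder_neqE_nat subsetD)
qed

lemma apery_mod_surj:
  assumes "x \<in> S" "0 < d"
  shows "\<exists>w\<in>apery S d. w mod d = x mod d"
proof -
  define m where "m = (LEAST m. m \<in> S \<and> m mod d = x mod d)"
  have m: "m \<in> S" "m mod d = x mod d"
    using LeastI[of "\<lambda>m. m \<in> S \<and> m mod d = x mod d", OF conjI[OF assms(1)]]
    unfolding m_def by auto
  have "m \<in> apery S d"
  proof (rule ccontr)
    assume "m \<notin> apery S d"
    then have "d \<le> m" "m - d \<in> S" using m(1) by (auto simp: apery_def)
    moreover have "(m - d) mod d = x mod d" using m(2) \<open>d \<le> m\<close> by (simp add: le_mod_geq)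
    ultimately have "m \<le> m - d" unfolding m_def by (intro Least_le) simp
    with assms(2) \<open>d \<le> m\<close> show False by linarith
  qed
  with m(2) show ?thesis by blast
qed

lemma card_apery:
  assumes "Gcd A = 1" "d \<in> gen_semigroup A" "0 < d"
  shows "card (apery (gen_semigroup A) d) = d"
proof -
  have "(\<lambda>w. w mod d) ` apery (gen_semigroup A) d = {..<d}"
  proof (intro equalityI subsetI)
    fix r assume "r \<in> {..<d}"
    with assms(1) obtain x where "x \<in> gen_semigroup A" "x mod d = r"
      using gen_semigroup_mod_surj by blast
    with apery_mod_surj[OF _ assms(3)] show "r \<in> (\<lambda>w. w mod d) ` apery (gen_semigroup A) d"
      by (metis image_eqI)
  qed (use assms(3) in auto)
  then show ?thesis
    using card_image[OF apery_mod_inj[OF assms(2)]] by simp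
qed

lemma apery_sumset_msg_minus:
  assumes "w \<in> apery (gen_semigroup A) d" "w \<in> sumset s (msg (gen_semigroup A))"
  shows "w \<in> sumset s (msg (gen_semigroup A) - {d})"
  using assms
proof (induction s arbitrary: w)
  case (Suc s)
  then obtain x b where xb: "w = x + b" "x \<in> sumset s (msg (gen_semigroup A))"
    "b \<in> msg (gen_semigroup A)" by auto
  have x: "x \<in> gen_semigroup A" and b: "b \<in> gen_semigroup A"
    using xb(2,3) sumset_subset_gen_semigroup[OF msg_subset] msg_subset by blast+
  have "x \<in> apery (gen_semigroup A) d"
    using apery_summand[OF _ x b] Suc.prems(1) xb(1) by simp
  then have "x \<in> sumset s (msg (gen_semigroup A) - {d})"
    using Suc.IH xb(2) by blast
  moreover have "b \<noteq> d"
    using add_notin_apery[OF x] Suc.prems(1) xb(1) by blast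
  ultimately show ?case using xb(1,3) by auto
qed simp

lemma ex_sumset_apery:
  assumes "w \<in> apery (gen_semigroup A) d"
  shows "\<exists>s. w \<in> sumset s (msg (gen_semigroup A) - {d})"
proof -
  obtain s where "w \<in> sumset s (msg (gen_semigroup A))"
    using ex_sumset_msg assms apery_subset by blast
  with assms show ?thesis by (blast intro: apery_sumset_msg_minus)
qed

lemma covers_apery_iff:
  assumes "y \<in> apery (gen_semigroup A) d" "z \<in> apery (gen_semigroup A) d"
  shows "covers_in (apery (gen_semigroup A) d) (sg_le (gen_semigroup A)) y z
    \<longleftrightarrow> y \<le> z \<and> z - y \<in> msg (gen_semigroup A)"
proof
  assume cov: "covers_in (apery (gen_semigroup A) d) (sg_le (gen_semigroup A)) y z"
  have False
    if "u \<in> gen_semigroup A" "v \<in> gen_semigroup A" "u \<noteq> 0" "v \<noteq> 0" "z - y = u + v" for u v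
  proof -
    have yu: "y + u \<in> gen_semigroup A"
      using assms(1) apery_subset that(1) by (blast intro: gen_semigroup_add)
    have "z = (y + u) + v" using cov that(5) by (auto simp: covers_in_def sg_le_def)
    then have "y + u \<in> apery (gen_semigroup A) d"
      using apery_summand[OF _ yu that(2)] assms(2) by simp
    moreover have "sg_le (gen_semigroup A) y (y + u)" "sg_le (gen_semigroup A) (y + u) z"
      using that(1,2) \<open>z = (y + u) + v\<close> by (simp_all add: sg_le_def)
    moreover have "y + u \<noteq> y" "y + u \<noteq> z" using that(3,4) \<open>z = (y + u) + v\<close> by simp_all
    ultimately show False using cov unfolding covers_in_def by blast
  qed
  with cov show "y \<le> z \<and> z - y \<in> msg (gen_semigroup A)"
    by (auto simp: covers_in_def sg_le_def msg_def)
next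
  assume yz: "y \<le> z \<and> z - y \<in> msg (gen_semigroup A)"
  have "\<not> (sg_le (gen_semigroup A) y w \<and> sg_le (gen_semigroup A) w z \<and> w \<noteq> y \<and> w \<noteq> z)" for w
  proof
    assume "sg_le (gen_semigroup A) y w \<and> sg_le (gen_semigroup A) w z \<and> w \<noteq> y \<and> w \<noteq> z"
    then have "w - y \<in> gen_semigroup A" "z - w \<in> gen_semigroup A" "w - y \<noteq> 0" "z - w \<noteq> 0"
      "z - y = (w - y) + (z - w)"
      by (auto simp: sg_le_def)
    with yz show False unfolding msg_def by blast
  qed
  moreover have "z - y \<in> gen_semigroup A" "z - y \<noteq> 0"
    using yz msg_subset zero_notin_msg by auto
  ultimately show "covers_in (apery (gen_semigroup A) d) (sg_le (gen_semigroup A)) y z"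
    using yz assms unfolding covers_in_def sg_le_def by auto
qed

lemma graded_apery_iff_unique_length:
  "graded (apery (gen_semigroup A) d) (sg_le (gen_semigroup A)) \<longleftrightarrow>
   (\<forall>w\<in>apery (gen_semigroup A) d. \<forall>s t.
      w \<in> sumset s (msg (gen_semigroup A) - {d}) \<longrightarrow>
      w \<in> sumset t (msg (gen_semigroup A) - {d}) \<longrightarrow> s = t)"
  (is "graded ?Ap ?le \<longleftrightarrow> (\<forall>w\<in>?Ap. \<forall>s t. w \<in> sumset s ?B \<longrightarrow> w \<in> sumset t ?B \<longrightarrow> s = t)")
proof
  assume "graded ?Ap ?le"
  then obtain \<rho> :: "nat \<Rightarrow> nat" where \<rho>: "\<And>y z. covers_in ?Ap ?le y z \<Longrightarrow> \<rho> z = \<rho> y + 1"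
    unfolding graded_def by blast
  have rank: "\<rho> w = \<rho> 0 + s" if "w \<in> ?Ap" "w \<in> sumset s ?B" for w s
    using that
  proof (induction s arbitrary: w)
    case (Suc s)
    then obtain x b where xb: "w = x + b" "x \<in> sumset s ?B" "b \<in> ?B" by auto
    have x: "x \<in> gen_semigroup A" and b: "b \<in> gen_semigroup A"
      using xb(2,3) sumset_subset_gen_semigroup[of ?B A] msg_subset by blast+
    have "x \<in> ?Ap"
      using apery_summand[OF _ x b] Suc.prems(1) xb(1) by simp
    moreover have "covers_in ?Ap ?le x w"
      using covers_apery_iff[OF \<open>x \<in> ?Ap\<close> Suc.prems(1)] xb(1,3) by simp
    ultimately show ?case using \<rho> Suc.IH xb(2) by fastforce
  qed simp
  then show "\<forall>w\<in>?Ap. \<forall>s t. w \<in> sumset s ?B \<longrightarrow> w \<in> sumset t ?B \<longrightarrow> s = t"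
    by (metis add_left_cancel)
next
  assume unique: "\<forall>w\<in>?Ap. \<forall>s t. w \<in> sumset s ?B \<longrightarrow> w \<in> sumset t ?B \<longrightarrow> s = t"
  define \<rho> where "\<rho> w = (SOME s. w \<in> sumset s ?B)" for w
  have \<rho>: "w \<in> sumset (\<rho> w) ?B" if "w \<in> ?Ap" for w
    unfolding \<rho>_def using ex_sumset_apery[OF that] by (rule someI_ex)
  have "\<rho> z = \<rho> y + 1" if cov: "covers_in ?Ap ?le y z" for y z
  proof -
    have yz: "y \<in> ?Ap" "z \<in> ?Ap" using cov by (simp_all add: covers_in_def)
    then have "y \<le> z" "z - y \<in> msg (gen_semigroup A)"
      using cov covers_apery_iff by blast+
    moreover have "z \<noteq> y + d"
      using yz add_notin_apery apery_subset by blast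
    ultimately have "z - y \<in> ?B" by auto
    with \<rho>[OF yz(1)] have "y + (z - y) \<in> sumset (Suc (\<rho> y)) ?B"
      unfolding sumset.simps by blast
    with \<open>y \<le> z\<close> have "z \<in> sumset (\<rho> y + 1) ?B" by simp
    with unique \<rho>[OF yz(2)] yz(2) show ?thesis by blast
  qed
  then show "graded ?Ap ?le"
    unfolding graded_def by blast
qed

theorem mainTheorem3:
  fixes a :: "nat \<Rightarrow> nat" and n d :: nat
  assumes "n \<ge> 1"
    and "0 < a 1"
    and "\<And>i. 1 \<le> i \<Longrightarrow> i < n \<Longrightarrow> a i < a (Suc i)"
    and "a n = d"
    and "Gcd (a ` {1..n}) = 1"
  shows "graded (apery (gen_semigroup (a ` {1..n})) d) (sg_le (gen_semigroup (a ` {1..n})))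
     \<longleftrightarrow>
     (let S = gen_semigroup (a ` {1..n});
          Ap = apery S d;
          A' = msg S - {a n};
          N = Max {s. Ap \<inter> sumset s A' \<noteq> {}}
      in (\<Sum>s = 0..N. card (Ap \<inter> sumset s A')) = d)"
proof -
  define S where "S = gen_semigroup (a ` {1..n})"
  define Ap where "Ap = apery S d"
  define A' where "A' = msg S - {d}"
  define N where "N = Max {s. Ap \<inter> sumset s A' \<noteq> {}}"
  have "a 1 \<le> a n"
    using le_of_Suc_less[of 1 n a] assms(1,3) by blast
  then have "0 < d" "d \<in> S"
    using assms(1,2,4) by (auto simp: S_def intro: gen_semigroup_generator)
  then have card_Ap: "card Ap = d"
    unfolding Ap_def S_def using card_apery[OF assms(5)] by blast
  with \<open>0 < d\<close> have "finite Ap" by (simp add: card_ge_0_finite)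
  have length_le_N: "s \<le> N" if "w \<in> Ap" "w \<in> sumset s A'" for w s
    unfolding N_def using sumset_index_le_Max[OF \<open>finite Ap\<close> _ that] zero_notin_msg
    by (auto simp: A'_def)
  have covered: "\<exists>s\<in>{0..N}. w \<in> sumset s A'" if w: "w \<in> Ap" for w
  proof -
    obtain s where "w \<in> sumset s A'"
      using ex_sumset_apery w unfolding Ap_def A'_def S_def by blast
    with length_le_N w show ?thesis by auto
  qed
  have "graded Ap (sg_le S) \<longleftrightarrow>
      (\<forall>w\<in>Ap. \<forall>s t. w \<in> sumset s A' \<longrightarrow> w \<in> sumset t A' \<longrightarrow> s = t)"
    unfolding Ap_def A'_def S_def by (rule graded_apery_iff_unique_length)
  also have "\<dots> \<longleftrightarrow>
      (\<forall>w\<in>Ap. \<forall>s\<in>{0..N}. \<forall>t\<in>{0..N}. w \<in> sumset s A' \<longrightarrow> w \<in> sumset t A' \<longrightarrow> s = t)"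
    using length_le_N by auto
  also have "\<dots> \<longleftrightarrow> (\<Sum>s = 0..N. card (Ap \<inter> sumset s A')) = card Ap"
    using sum_card_inter_eq_card_iff[OF \<open>finite Ap\<close> _ covered] by simp
  finally show ?thesis
    using card_Ap assms(4) by (simp add: Let_def S_def Ap_def A'_def N_def)
qed

end
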